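(* Let $p$ be a prime number of the form $p = 5m^2 + 4mn + 9n^2$ with integers $m, n$. Then the equation $p x^4 - 41 y^4 = z^2$ has no rational solutions $(x,y,z)$ other than the trivial solution $x=y=z=0$. *)

theory Defs
  imports Complex_Main "HOL-Computational_Algebra.Primes"
begin

end

(*
  With a = 5m + 2n and b = n we have a^2 + 41 b^2 = 5p. After clearing denominators and common
  factors, a nontrivial solution gives coprime X, Y with X odd and Z^2 + 41 (Y^2)^2 = p (X^2)^2.
  For a suitable sign of b the prime p divides a Y^2 - b Z, and composing the two representations
  by x^2 + 41 y^2 and dividing by p^2 yields u^2 + 41 v^2 = 5 T^2 with T = X^2 (or T = 5 X'^2 after
  cancelling a common factor 5 of u and v), where u, v are coprime and T is odd.

  Such a T is never a square modulo 41. By quadratic reciprocity every odd prime q dividing v has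
  (q/5) = 1 and every odd prime q dividing u has (q/5) = (q/41); since -1 is a square modulo 5 and
  41, the same holds for all odd divisors. Combined with u = +-2v (mod 5) and the parity pattern
  forced modulo 8, this gives (u/41) = 1. But T = y^2 (mod 41) would give u^2 = 5 y^4 = (13 y^2)^2,
  so u = +-13 y^2 (mod 41), and 13 is a non-residue modulo 41.
*)

theory Submission
  imports Defs "HOL-Number_Theory.Number_Theory" "HOL-Computational_Algebra.Squarefree"
begin

lemma euler_criterion_int:
  fixes p :: int
  assumes "prime p" "2 < p"
  shows "[Legendre a p = a ^ nat ((p - 1) div 2)] (mod p)"
proof -
  have "nat ((p - 1) div 2) = (nat p - 1) div 2" by (simp add: nat_div_distrib nat_diff_distrib)
  then show ?thesis using euler_criterion[of "nat p" a] assms by simp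
qed

lemma Legendre_eqI:
  fixes p :: int
  assumes "prime p" "2 < p" "l \<in> {-1, 0, 1}" and "[l = a ^ nat ((p - 1) div 2)] (mod p)"
  shows "Legendre a p = l"
proof -
  have "[Legendre a p + 1 = l + 1] (mod p)"
    using euler_criterion_int[OF assms(1,2)] assms(4)
    by (meson cong_add_rcancel cong_sym cong_trans)
  moreover have "Legendre a p + 1 \<in> {0, 1, 2}" "l + 1 \<in> {0, 1, 2}"
    using assms(3) by (auto simp: Legendre_def)
  ultimately show ?thesis
    using assms(2) cong_less_imp_eq_int[of "Legendre a p + 1" p "l + 1"] by auto
qed

lemma Legendre_mult:
  fixes p :: int
  assumes "prime p" "2 < p"
  shows "Legendre (a * b) p = Legendre a p * Legendre b p"
proof (rule Legendre_eqI[OF assms])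
  show "Legendre a p * Legendre b p \<in> {-1, 0, 1}" by (auto simp: Legendre_def)
  show "[Legendre a p * Legendre b p = (a * b) ^ nat ((p - 1) div 2)] (mod p)"
    unfolding power_mult_distrib by (intro cong_mult euler_criterion_int assms)
qed

lemma Legendre_cong:
  fixes p :: int
  assumes "[a = b] (mod p)"
  shows "Legendre a p = Legendre b p"
proof -
  have "[a = 0] (mod p) \<longleftrightarrow> [b = 0] (mod p)" "QuadRes p a \<longleftrightarrow> QuadRes p b"
    unfolding QuadRes_def using assms by (meson cong_sym cong_trans)+
  then show ?thesis by (simp add: Legendre_def)
qed

lemma Legendre_square:
  fixes p :: int
  assumes "prime p" "2 < p" "\<not> p dvd a"
  shows "Legendre (a^2) p = 1"
  using assms Legendre_mult[OF assms(1,2), of a a]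
  by (auto simp: Legendre_def power2_eq_square cong_0_iff)

lemma Legendre_one:
  fixes p :: int
  assumes "prime p"
  shows "Legendre 1 p = 1"
  using assms unfolding Legendre_def QuadRes_def
  by (metis cong_0_iff cong_refl not_prime_unit power_one)

lemma Legendre_eq_if_cong_squares:
  fixes p :: int
  assumes "prime p" "2 < p" "Legendre (-1) p = 1" "[x^2 = y^2] (mod p)"
  shows "Legendre x p = Legendre y p"
proof -
  have "p dvd (x - y) * (x + y)"
    using assms(4) by (simp add: cong_iff_dvd_diff power2_eq_square algebra_simps)
  then have "[x = y] (mod p) \<or> [x = -1 * y] (mod p)"
    using assms(1) by (auto simp: cong_iff_dvd_diff prime_dvd_mult_iff)
  then show ?thesis
    using Legendre_cong Legendre_mult[OF assms(1,2), of "-1" y] assms(3) by auto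
qed

lemma Legendre_eq_if_cong_mult_squares:
  fixes p :: int
  assumes "prime p" "2 < p" "[c * x^2 = d * y^2] (mod p)" "\<not> p dvd c * x"
  shows "Legendre c p = Legendre d p"
proof -
  have "\<not> p dvd d * y^2"
    using assms(1,3,4) by (metis cong_dvd_iff dvd_mult2 prime_dvd_mult_iff prime_dvd_power)
  then have "\<not> p dvd y" by (auto simp: power2_eq_square)
  moreover have "\<not> p dvd x" using assms(4) by auto
  ultimately show ?thesis
    using Legendre_cong[OF assms(3)] Legendre_square[OF assms(1,2)]
    by (simp add: Legendre_mult[OF assms(1,2)])
qed

lemma Legendre_swap_if_1_mod_4:
  fixes p q :: int
  assumes "prime p" "[p = 1] (mod 4)" "prime q" "2 < q" "Legendre p q \<noteq> 0"
  shows "Legendre q p = Legendre p q"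
proof -
  have "p \<noteq> q" using assms(5) by (auto simp: Legendre_def cong_0_iff)
  have "2 < p" using assms(1,2) prime_ge_2_int[of p] by (cases "p = 2") (auto simp: cong_def)
  have "even ((p - 1) div 2)" using assms(2) by (auto simp: cong_def) presburger
  then have "even (nat ((p - 1) div 2 * ((q - 1) div 2)))"
    using \<open>2 < p\<close> \<open>2 < q\<close> by (simp add: even_nat_iff)
  then have "Legendre p q * Legendre q p = 1"
    using Quadratic_Reciprocity_int[of p q] assms \<open>p \<noteq> q\<close> \<open>2 < p\<close> by simp
  then show ?thesis using assms(5) by (auto simp: Legendre_def split: if_splits)
qed

lemma multiplicative_eq_1_if_prime_divisors:
  fixes f :: "int \<Rightarrow> int"
  assumes mult: "\<And>a b. f (a * b) = f a * f b" and units: "f 1 = 1" "f (-1) = 1"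
    and "\<And>q. prime q \<Longrightarrow> q dvd x \<Longrightarrow> f q = 1" and "x \<noteq> 0"
  shows "f x = 1"
  using assms(4,5)
proof (induction x rule: prime_divisors_induct)
  case (unit x)
  then show ?case using units by (auto simp: zdvd1_eq abs_if split: if_splits)
next
  case (factor q x)
  then show ?case by (simp add: mult)
qed simp

lemma prime_dvd_odd_gt_2:
  fixes q w :: int
  assumes "prime q" "q dvd w" "odd w"
  shows "2 < q"
  using assms prime_ge_2_int[of q] by (cases "q = 2") auto

lemma odd_square_cong_1_mod_8:
  fixes z :: int
  assumes "odd z"
  shows "[z^2 = 1] (mod 8)"
proof -
  have "z mod 8 = 1 \<or> z mod 8 = 3 \<or> z mod 8 = 5 \<or> z mod 8 = 7" using assms by presburger
  then show ?thesis by (auto simp: cong_def power_mod[symmetric, of z])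
qed

lemma composition_descent:
  fixes P a b d k Z W N :: int
  assumes "prime P" and ab: "a^2 + d * b^2 = k * P" and ZW: "Z^2 + d * W^2 = P * N"
    and "coprime Z W" and "P dvd a * W - b * Z"
  obtains u v where "u^2 + d * v^2 = k * N" and "gcd u v dvd k"
proof -
  obtain v where v: "a * W - b * Z = P * v" using assms(5) ..
  have "\<not> P dvd W"
  proof
    assume "P dvd W"
    moreover have "Z^2 = P * N - d * W^2" using ZW by simp
    ultimately have "P dvd Z"
      using assms(1) prime_dvd_power[of P Z 2] by (simp add: power2_eq_square)
    then show False
      using \<open>P dvd W\<close> assms(1,4) coprime_common_divisor not_prime_unit by blast
  qed
  have "W * (a * Z + d * b * W) = Z * (a * W - b * Z) + b * (Z^2 + d * W^2)"
    by (simp add: algebra_simps power2_eq_square)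
  also have "\<dots> = P * (Z * v + b * N)" unfolding v ZW by (simp add: algebra_simps)
  finally have "P dvd a * Z + d * b * W"
    using \<open>\<not> P dvd W\<close> assms(1) by (metis dvd_triv_left prime_dvd_mult_iff)
  then obtain u where u: "a * Z + d * b * W = P * u" ..
  have "P^2 * (u^2 + d * v^2) = (P * u)^2 + d * (P * v)^2"
    by (simp add: algebra_simps power2_eq_square)
  also have "\<dots> = (a * Z + d * b * W)^2 + d * (a * W - b * Z)^2" by (simp only: u v)
  also have "\<dots> = (a^2 + d * b^2) * (Z^2 + d * W^2)"
    by (simp add: algebra_simps power2_eq_square)
  also have "\<dots> = P^2 * (k * N)" unfolding ab ZW by (simp add: power2_eq_square)
  finally have "u^2 + d * v^2 = k * N" using assms(1) by simp
  have "P * (a * u - d * b * v) = a * (P * u) - d * b * (P * v)" by (simp add: algebra_simps)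
  also have "\<dots> = a * (a * Z + d * b * W) - d * b * (a * W - b * Z)" by (simp only: u v)
  also have "\<dots> = (a^2 + d * b^2) * Z" by (simp add: algebra_simps power2_eq_square)
  also have "\<dots> = P * (k * Z)" by (simp add: ab)
  finally have "a * u - d * b * v = k * Z" using assms(1) by simp
  have "P * (a * v + b * u) = a * (P * v) + b * (P * u)" by (simp add: algebra_simps)
  also have "\<dots> = a * (a * W - b * Z) + b * (a * Z + d * b * W)" by (simp only: u v)
  also have "\<dots> = (a^2 + d * b^2) * W" by (simp add: algebra_simps power2_eq_square)
  also have "\<dots> = P * (k * W)" by (simp add: ab)
  finally have "a * v + b * u = k * W" using assms(1) by simp
  have "gcd u v dvd gcd (k * Z) (k * W)"
    by (simp flip: \<open>a * u - d * b * v = k * Z\<close> \<open>a * v + b * u = k * W\<close>)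
  also have "gcd (k * Z) (k * W) = \<bar>k\<bar>"
    using assms(4) gcd_mult_distrib_int[of k Z W] by (simp add: coprime_iff_gcd_eq_1)
  finally have "gcd u v dvd k" by simp
  with \<open>u^2 + d * v^2 = k * N\<close> show thesis by (rule that)
qed

lemma coprime_quartic_square_root:
  fixes P d X Y Z :: int
  assumes "squarefree P" and eq: "P * X^4 - d * Y^4 = Z^2" and "coprime X Y"
  shows "coprime Z Y"
proof -
  define g where "g = gcd Z Y"
  have "g^2 dvd Z^2" "g^2 dvd Y^2" by (simp_all add: g_def dvd_power_same)
  then have "g^2 dvd Z^2 + d * (Y^2 * Y^2)" by (intro dvd_add dvd_mult dvd_mult2)
  moreover have "P * X^4 = Z^2 + d * (Y^2 * Y^2)"
    using eq by (simp add: power4_eq_xxxx power2_eq_square)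
  ultimately have "g^2 dvd P * X^4" by simp
  moreover have "coprime g X"
    unfolding g_def using assms(3) by (meson coprime_divisors coprime_commute dvd_refl gcd_dvd2)
  then have "coprime (g^2) (X^4)" by simp
  ultimately have "g^2 dvd P" by (simp add: coprime_dvd_mult_left_iff)
  then have "is_unit g" using assms(1) by (simp add: squarefree_def)
  then show ?thesis by (simp add: g_def coprime_iff_gcd_eq_1)
qed

lemma odd_quartic_1_mod_8:
  fixes P d X Y Z :: int
  assumes eq: "P * X^4 - d * Y^4 = Z^2" and "[d = 1] (mod 8)" and "coprime X Y"
  shows "odd X"
proof
  assume "even X"
  then obtain X' where X': "X = 2 * X'" ..
  have "odd Y" using \<open>even X\<close> assms(3) coprime_common_divisor[of X Y 2] by auto
  have Z2: "Z^2 = 8 * (2 * P * X'^4) - d * (Y^2)^2"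
    using eq[symmetric] X' by (simp add: power_mult_distrib power4_eq_xxxx power2_eq_square)
  have "odd d" using assms(2) by (auto simp: cong_def) presburger
  then have "odd (Z^2)"
    unfolding Z2 using \<open>odd Y\<close> by (simp only: even_diff even_add even_mult_iff) simp
  have "[Z^2 = 0 - 1 * 1] (mod 8)"
    unfolding Z2 using \<open>odd Y\<close> assms(2)
    by (intro cong_diff cong_mult odd_square_cong_1_mod_8) (simp_all add: cong_0_iff)
  then show False using odd_square_cong_1_mod_8[of Z] \<open>odd (Z^2)\<close> by (simp add: cong_def)
qed

lemma quartic_int_solution_of_rat:
  fixes c d :: int and x y z :: rat
  assumes "of_int c * x^4 - of_int d * y^4 = z^2"
  obtains D X Y Z :: int where "D \<noteq> 0" "x = of_int X / of_int D" "y = of_int Y / of_int D"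
    "c * X^4 - d * Y^4 = Z^2"
proof -
  obtain a1 b1 where x: "x = of_int a1 / of_int b1" and "b1 > 0"
    by (cases x) (auto simp: Fract_of_int_quotient)
  obtain a2 b2 where y: "y = of_int a2 / of_int b2" and "b2 > 0"
    by (cases y) (auto simp: Fract_of_int_quotient)
  obtain a3 b3 where z: "z = of_int a3 / of_int b3" and "b3 > 0"
    by (cases z) (auto simp: Fract_of_int_quotient)
  define D where "D = b1 * b2 * b3"
  define X Y Z where "X = a1 * b2 * b3" and "Y = a2 * b1 * b3" and "Z = a3 * b3 * b1^2 * b2^2"
  have "D \<noteq> 0" using \<open>b1 > 0\<close> \<open>b2 > 0\<close> \<open>b3 > 0\<close> by (simp add: D_def)
  have xX: "x = of_int X / of_int D" and yY: "y = of_int Y / of_int D"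
    and zZ: "z = of_int Z / (of_int D)^2"
    using \<open>b1 > 0\<close> \<open>b2 > 0\<close> \<open>b3 > 0\<close>
    by (simp_all add: x y z X_def Y_def Z_def D_def power2_eq_square)
  have "(of_int (c * X^4 - d * Y^4 - Z^2) :: rat)
      = (of_int D)^4 * (of_int c * x^4 - of_int d * y^4 - z^2)"
    using \<open>D \<noteq> 0\<close> by (simp add: xX yY zZ field_simps power4_eq_xxxx power2_eq_square)
  also have "\<dots> = 0" using assms by simp
  finally have "c * X^4 - d * Y^4 = Z^2" by (simp only: of_int_eq_0_iff)
  with \<open>D \<noteq> 0\<close> xX yY show thesis by (rule that)
qed

lemma quartic_coprime_solution:
  fixes c d X Y Z :: int
  assumes eq: "c * X^4 - d * Y^4 = Z^2" and "X \<noteq> 0 \<or> Y \<noteq> 0"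
  obtains X' Y' Z' where "c * X'^4 - d * Y'^4 = Z'^2" "coprime X' Y'"
proof -
  define g where "g = gcd X Y"
  have "g \<noteq> 0" using assms(2) by (simp add: g_def)
  then obtain X' Y' where XY: "X = X' * g" "Y = Y' * g" and "coprime X' Y'"
    using gcd_coprime_exists[of X Y] unfolding g_def by blast
  have Z2: "Z^2 = (g^2)^2 * (c * X'^4 - d * Y'^4)"
    using eq unfolding XY by (simp add: algebra_simps power2_eq_square power4_eq_xxxx)
  then have "(g^2)^2 dvd Z^2" by simp
  then have "g^2 dvd Z" by (metis pow_divides_pow_iff zero_less_numeral)
  then obtain Z' where Z': "Z = g^2 * Z'" ..
  have "(g^2)^2 * Z'^2 = (g^2)^2 * (c * X'^4 - d * Y'^4)"
    using Z2 unfolding Z' by (simp only: power_mult_distrib)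
  then have "c * X'^4 - d * Y'^4 = Z'^2" using \<open>g \<noteq> 0\<close> by simp
  with \<open>coprime X' Y'\<close> show thesis using that by blast
qed

lemma Legendre_minus_one_5: "Legendre (-1) 5 = 1"
  and Legendre_minus_one_41: "Legendre (-1) 41 = 1"
  and Legendre_2_5: "Legendre 2 5 = -1"
  and Legendre_2_41: "Legendre 2 41 = 1"
  and Legendre_13_41: "Legendre 13 41 = -1"
  by (rule Legendre_eqI; simp add: cong_def)+

locale primitive_solution_5_41 =
  fixes u v T :: int
  assumes eq: "u^2 + 41 * v^2 = 5 * T^2" and coprime: "coprime u v"
begin

lemma parity_cases:
  assumes "odd T"
  obtains w where "odd u" "v = 2 * w" "odd w" | w where "u = 2 * w" "odd w" "odd v"
proof -
  have T2: "[5 * T^2 = 5] (mod 8)"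
    using cong_mult[OF cong_refl odd_square_cong_1_mod_8[OF assms], of 5] by simp
  have "\<not> (even u \<and> even v)" using coprime coprime_common_divisor[of u v 2] by auto
  then consider "odd u" "odd v" | "odd u" "even v" | "even u" "odd v" by blast
  then show thesis
  proof cases
    case 1
    then have "[u^2 + 41 * v^2 = 1 + 41 * 1] (mod 8)"
      by (intro cong_add cong_mult cong_refl odd_square_cong_1_mod_8)
    then show ?thesis using T2 eq by (simp add: cong_def)
  next
    case 2
    then obtain w where w: "v = 2 * w" by blast
    have "odd w"
    proof
      assume "even w"
      then obtain k where "v = 4 * k" using w by (auto elim: evenE)
      then have "[41 * v^2 = 0] (mod 8)" by (simp add: cong_0_iff power_mult_distrib)
      then have "[u^2 + 41 * v^2 = 1 + 0] (mod 8)"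
        using odd_square_cong_1_mod_8[OF \<open>odd u\<close>] by (intro cong_add)
      then show False using T2 eq by (simp add: cong_def)
    qed
    then show ?thesis using that 2 w by blast
  next
    case 3
    then obtain w where w: "u = 2 * w" by blast
    have "odd w"
    proof
      assume "even w"
      then obtain k where "u = 4 * k" using w by (auto elim: evenE)
      then have "[u^2 = 0] (mod 8)" by (simp add: cong_0_iff power_mult_distrib)
      then have "[u^2 + 41 * v^2 = 0 + 41 * 1] (mod 8)"
        using odd_square_cong_1_mod_8[OF \<open>odd v\<close>] by (intro cong_add cong_mult cong_refl)
      then show False using T2 eq by (simp add: cong_def)
    qed
    then show ?thesis using that 3 w by blast
  qed
qed

lemma not_41_dvd_u: "\<not> 41 dvd u"
proof
  assume "41 dvd u"
  then obtain u' where u': "u = 41 * u'" ..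
  have "5 * T^2 = 41 * (41 * u'^2 + v^2)" using eq u' by (simp add: algebra_simps power2_eq_square)
  then have "(41::int) dvd T"
    using prime_dvd_mult_iff[of "41::int" 5 "T^2"] prime_dvd_power[of "41::int" T 2] by simp
  then obtain T' where T': "T = 41 * T'" ..
  have "v^2 = 41 * (5 * T'^2 - u'^2)" using eq u' T' by (simp add: algebra_simps power2_eq_square)
  then have "(41::int) dvd v" using prime_dvd_power[of "41::int" v 2] by simp
  then show False using \<open>41 dvd u\<close> coprime coprime_common_divisor[of u v 41] by simp
qed

lemma Legendre_5_prime_dvd_v:
  assumes "prime q" "2 < q" "q dvd v"
  shows "Legendre q 5 = 1"
proof -
  have "5 * T^2 - 1 * u^2 = 41 * v^2" using eq by simp
  then have "[5 * T^2 = 1 * u^2] (mod q)"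
    using assms(3) by (simp add: cong_iff_dvd_diff power2_eq_square)
  then have "[1 * u^2 = 5 * T^2] (mod q)" by (rule cong_sym)
  moreover have "\<not> q dvd 1 * u"
    using assms coprime coprime_common_divisor[of u v q] by (auto dest: prime_gt_1_int)
  ultimately have "Legendre 1 q = Legendre 5 q"
    by (rule Legendre_eq_if_cong_mult_squares[OF assms(1,2)])
  then have "Legendre 5 q = 1" using Legendre_one[OF assms(1)] by simp
  then show ?thesis using Legendre_swap_if_1_mod_4[of 5 q] assms by (simp add: cong_def)
qed

lemma Legendre_5_41_prime_dvd_u:
  assumes "prime q" "2 < q" "q dvd u"
  shows "Legendre q 5 * Legendre q 41 = 1"
proof -
  have "5 * T^2 - 41 * v^2 = u^2" using eq by simp
  then have "[5 * T^2 = 41 * v^2] (mod q)"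
    using assms(3) by (simp add: cong_iff_dvd_diff power2_eq_square)
  then have "[41 * v^2 = 5 * T^2] (mod q)" by (rule cong_sym)
  moreover have "\<not> q dvd 41 * v"
  proof
    assume "q dvd 41 * v"
    moreover have "\<not> q dvd v"
      using assms coprime coprime_common_divisor[of u v q] by (auto dest: prime_gt_1_int)
    ultimately have "q dvd 41" using assms(1) prime_dvd_mult_iff by blast
    then have "q = 41" using assms(1) by (simp add: primes_dvd_imp_eq)
    then show False using assms(3) not_41_dvd_u by simp
  qed
  ultimately have L: "Legendre 41 q = Legendre 5 q"
    by (rule Legendre_eq_if_cong_mult_squares[OF assms(1,2)])
  have "Legendre 41 q \<noteq> 0"
    using \<open>\<not> q dvd 41 * v\<close> by (auto simp: Legendre_def cong_0_iff)
  have "Legendre q 5 = Legendre 5 q" "Legendre q 41 = Legendre 41 q"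
    using Legendre_swap_if_1_mod_4[of 5 q] Legendre_swap_if_1_mod_4[of 41 q]
      assms L \<open>Legendre 41 q \<noteq> 0\<close>
    by (simp_all add: cong_def)
  then show ?thesis
    using L \<open>Legendre 41 q \<noteq> 0\<close> by (auto simp: Legendre_def split: if_splits)
qed

lemma Legendre_5_odd_dvd_v:
  assumes "odd w" "w dvd v"
  shows "Legendre w 5 = 1"
proof (rule multiplicative_eq_1_if_prime_divisors[where f = "\<lambda>w. Legendre w 5"])
  fix q assume "prime q" "q dvd w"
  then show "Legendre q 5 = 1"
    using assms prime_dvd_odd_gt_2 Legendre_5_prime_dvd_v dvd_trans by blast
qed (use assms in \<open>auto simp: Legendre_mult Legendre_one Legendre_minus_one_5\<close>)

lemma Legendre_5_41_odd_dvd_u: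
  assumes "odd w" "w dvd u"
  shows "Legendre w 5 * Legendre w 41 = 1"
proof (rule multiplicative_eq_1_if_prime_divisors
    [where f = "\<lambda>w. Legendre w 5 * Legendre w 41"])
  fix q assume "prime q" "q dvd w"
  then show "Legendre q 5 * Legendre q 41 = 1"
    using assms prime_dvd_odd_gt_2 Legendre_5_41_prime_dvd_u dvd_trans by blast
qed (use assms in
    \<open>auto simp: Legendre_mult Legendre_one Legendre_minus_one_5 Legendre_minus_one_41\<close>)

lemma Legendre_u_5: "Legendre u 5 = - Legendre v 5"
proof -
  have "(2 * v)^2 - u^2 = 5 * (9 * v^2 - T^2)"
    using eq by (simp add: algebra_simps power2_eq_square)
  then have "[(2 * v)^2 = u^2] (mod 5)" unfolding cong_iff_dvd_diff by (metis dvd_triv_left)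
  then have "[u^2 = (2 * v)^2] (mod 5)" by (rule cong_sym)
  then have "Legendre u 5 = Legendre (2 * v) 5"
    by (intro Legendre_eq_if_cong_squares Legendre_minus_one_5) simp_all
  then show ?thesis by (simp add: Legendre_mult Legendre_2_5)
qed

lemma Legendre_u_41:
  assumes "odd T"
  shows "Legendre u 41 = 1"
  using assms
proof (cases rule: parity_cases)
  case (1 w)
  have "Legendre u 5 = 1"
    using Legendre_u_5 Legendre_5_odd_dvd_v[of w] 1 by (simp add: Legendre_mult Legendre_2_5)
  then show ?thesis using Legendre_5_41_odd_dvd_u[of u] 1 by simp
next
  case (2 w)
  have "Legendre w 5 = 1"
    using Legendre_u_5 Legendre_5_odd_dvd_v[of v] 2 by (simp add: Legendre_mult Legendre_2_5)
  then show ?thesis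
    using Legendre_5_41_odd_dvd_u[of w] 2 by (simp add: Legendre_mult Legendre_2_41)
qed

lemma not_square_mod_41:
  assumes "odd T"
  shows "\<not> [T = y^2] (mod 41)"
proof
  assume T: "[T = y^2] (mod 41)"
  have "\<not> 41 dvd T"
  proof
    assume "41 dvd T"
    moreover have "u^2 = 5 * T^2 - 41 * v^2" using eq by simp
    ultimately have "(41::int) dvd u^2" by (simp add: power2_eq_square)
    then show False using not_41_dvd_u prime_dvd_power[of "41::int" u 2] by simp
  qed
  then have "\<not> 41 dvd y^2" using T by (auto simp: cong_dvd_iff)
  then have "\<not> 41 dvd y" by (auto simp: power2_eq_square)
  have "[u^2 = 5 * T^2] (mod 41)"
    using eq by (simp add: cong_iff_dvd_diff flip: eq)
  also have "[5 * T^2 = 5 * (y^2)^2] (mod 41)"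
    using T by (intro cong_mult cong_pow cong_refl)
  also have "[5 * (y^2)^2 = (13 * y^2)^2] (mod 41)"
    by (simp add: cong_iff_dvd_diff power_mult_distrib algebra_simps)
  finally have "Legendre u 41 = Legendre (13 * y^2) 41"
    by (intro Legendre_eq_if_cong_squares Legendre_minus_one_41) simp_all
  also have "\<dots> = -1"
    using Legendre_square[of 41 y] \<open>\<not> 41 dvd y\<close> by (simp add: Legendre_mult Legendre_13_41)
  finally show False using Legendre_u_41[OF assms] by simp
qed

end

lemma no_solution_5_41_square:
  fixes u v X :: int
  assumes eq: "u^2 + 41 * v^2 = 5 * (X^2)^2" and "gcd u v dvd 5" and "odd X"
  shows False
proof -
  have "prime (5::int)" by simp
  then have "gcd u v = 1 \<or> gcd u v = 5" using assms(2) by (simp add: prime_int_iff)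
  then show False
  proof
    assume "gcd u v = 1"
    then interpret primitive_solution_5_41 u v "X^2"
      by unfold_locales (simp_all add: eq coprime_iff_gcd_eq_1)
    show False using not_square_mod_41[of X] \<open>odd X\<close> by simp
  next
    assume g: "gcd u v = 5"
    then obtain u' v' where u': "u = 5 * u'" and v': "v = 5 * v'" by (metis gcd_dvd1 gcd_dvd2 dvdE)
    have "X^4 = 5 * (u'^2 + 41 * v'^2)"
      using eq u' v' by (simp add: algebra_simps power2_eq_square power4_eq_xxxx)
    then have "(5::int) dvd X" using prime_dvd_power[of "5::int" X 4] by simp
    then obtain X' where X': "X = 5 * X'" ..
    have eq': "u'^2 + 41 * v'^2 = 5 * (5 * X'^2)^2"
      using eq u' v' X' by (simp add: algebra_simps power2_eq_square)
    have "coprime u' v'"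
      using g u' v' gcd_mult_distrib_int[of 5 u' v'] by (simp add: coprime_iff_gcd_eq_1)
    then interpret primitive_solution_5_41 u' v' "5 * X'^2" using eq' by unfold_locales
    have "[5 * X'^2 = (13 * X')^2] (mod 41)" by (simp add: cong_iff_dvd_diff power_mult_distrib)
    moreover have "odd (5 * X'^2)" using \<open>odd X\<close> X' by simp
    ultimately show False using not_square_mod_41 by blast
  qed
qed

lemma no_coprime_quartic_solution:
  fixes P m n X Y Z :: int
  assumes "prime P" "P = 5 * m^2 + 4 * m * n + 9 * n^2"
    and eq: "P * X^4 - 41 * Y^4 = Z^2" and "coprime X Y"
  shows False
proof -
  define a b where "a = 5 * m + 2 * n" and "b = n"
  have ab: "a^2 + 41 * b^2 = 5 * P"
    using assms(2) by (simp add: a_def b_def algebra_simps power2_eq_square)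
  have ZW: "Z^2 + 41 * (Y^2)^2 = P * (X^2)^2"
    using eq by (simp add: algebra_simps flip: power_mult)
  have "coprime Z (Y^2)"
    using coprime_quartic_square_root[OF squarefree_prime[OF assms(1)] eq assms(4)] by simp
  have "(a * Y^2 - b * Z) * (a * Y^2 + b * Z)
      = (a^2 + 41 * b^2) * (Y^2)^2 - b^2 * (Z^2 + 41 * (Y^2)^2)"
    by (simp add: algebra_simps power2_eq_square)
  also have "\<dots> = P * (5 * (Y^2)^2 - b^2 * (X^2)^2)"
    unfolding ab ZW by (simp add: algebra_simps)
  finally have "P dvd (a * Y^2 - b * Z) * (a * Y^2 + b * Z)" by (rule dvdI)
  then have "P dvd a * Y^2 - b * Z \<or> P dvd a * Y^2 + b * Z"
    using assms(1) prime_dvd_mult_iff by blast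
  then obtain c where "a^2 + 41 * c^2 = 5 * P" and "P dvd a * Y^2 - c * Z"
    using ab by (metis diff_minus_eq_add mult_minus_left power2_minus)
  then obtain u v where "u^2 + 41 * v^2 = 5 * (X^2)^2" "gcd u v dvd 5"
    using composition_descent[OF assms(1) _ ZW \<open>coprime Z (Y^2)\<close>] by blast
  moreover have "odd X" using odd_quartic_1_mod_8[OF eq _ assms(4)] by (simp add: cong_def)
  ultimately show False by (rule no_solution_5_41_square)
qed

theorem proposition1:
  fixes p :: nat and m n :: int
  assumes "prime p"
    and "int p = 5 * m^2 + 4 * m * n + 9 * n^2"
  shows "\<forall>x y z :: rat. of_nat p * x^4 - 41 * y^4 = z^2 \<longrightarrow> x = 0 \<and> y = 0 \<and> z = 0"
proof (intro allI impI)
  fix x y z :: rat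
  assume rat_eq: "of_nat p * x^4 - 41 * y^4 = z^2"
  then have "of_int (int p) * x^4 - of_int 41 * y^4 = z^2" by simp
  then obtain D X Y Z where "D \<noteq> 0" "x = of_int X / of_int D" "y = of_int Y / of_int D"
    and int_eq: "int p * X^4 - 41 * Y^4 = Z^2"
    by (rule quartic_int_solution_of_rat)
  have "X = 0 \<and> Y = 0"
  proof (rule ccontr)
    assume "\<not> (X = 0 \<and> Y = 0)"
    then obtain X' Y' Z' where "int p * X'^4 - 41 * Y'^4 = Z'^2" "coprime X' Y'"
      using quartic_coprime_solution[OF int_eq] by blast
    moreover have "prime (int p)" using assms(1) by simp
    ultimately show False using no_coprime_quartic_solution assms(2) by blast
  qed
  then have "x = 0" "y = 0" using \<open>x = _\<close> \<open>y = _\<close> by simp_all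
  then show "x = 0 \<and> y = 0 \<and> z = 0" using rat_eq by simp
qed

end
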